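(* Let $0<\theta_m<\theta_M$, $\Theta=(\theta_m,\theta_M)$, $\alpha>0$, $r>0$. For $\lambda>0$ let $(c(\lambda),Q(\cdot,\lambda))$ be the unique pair with $(-\lambda c(\lambda)+\theta\lambda^2+r)Q+\alpha\partial_{\theta\theta}Q=0$ on $\Theta$, $\partial_\theta Q(\theta_m,\lambda)=\partial_\theta Q(\theta_M,\lambda)=0$, $Q>0$, $\int_\Theta Q\,d\theta=1$, and let $c^*=\min_{\lambda>0}c(\lambda)$. Define $H:\mathbb{R}\to\mathbb{R}$ by $H(\lambda)=|\lambda|c(|\lambda|)$ for $\lambda\neq0$ and $H(0)=r$. Then: for all $\lambda\in\mathbb{R}$ there exists a unique solution $(H(\lambda),Q(\cdot,\lambda))$ of $$(-H(\lambda)+\theta\lambda^2+r)Q+\alpha\partial_{\theta\theta}Q=0\text{ on }\Theta,\quad \partial_\theta Q(\theta_m,\lambda)=\partial_\theta Q(\theta_M,\lambda)=0,\quad Q>0,\quad\int_\Theta Q\,d\theta=1;$$ the map $\lambda\mapsto H(\lambda)$ is continuous and convex on $\mathbb{R}$ and satisfies $\lambda^2\theta_m+r\le H(\lambda)\le\lambda^2\theta_M+r$ for all $\lambda$; for all $\lambda\in\mathbb{R}$, $\inf_{s>0}\{sH(\lambda/s)\}=|\lambda|c^*$; and $2\sqrt{\theta_mr}\le c^*\le2\sqrt{\theta_Mr}$.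
   Context: It is known (and taken as given) that for every $\lambda>0$ the pair $(c(\lambda),Q(\cdot,\lambda))$ described exists and is unique, that $\lambda\mapsto c(\lambda)$ is continuous on $(0,\infty)$ with $\lambda^2\theta_m+r\le\lambda c(\lambda)\le\lambda^2\theta_M+r$, and that $c$ attains its minimum $c^*$ at some $\lambda^*>0$. *)

theory Defs
  imports "HOL-Analysis.Analysis"
begin

definition eig_pair :: "real \<Rightarrow> real \<Rightarrow> real \<Rightarrow> real \<Rightarrow> real \<Rightarrow> real \<Rightarrow> (real \<Rightarrow> real) \<Rightarrow> bool" where
  "eig_pair tm tM al r lam h Q \<longleftrightarrow>
     (\<exists>Q' Q''.
        (\<forall>t\<in>{tm..tM}. (Q has_real_derivative Q' t) (at t within {tm..tM}))
      \<and> (\<forall>t\<in>{tm<..<tM}. (Q' has_real_derivative Q'' t) (at t))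
      \<and> (\<forall>t\<in>{tm<..<tM}. (- h + t * lam\<^sup>2 + r) * Q t + al * Q'' t = 0)
      \<and> Q' tm = 0 \<and> Q' tM = 0)
   \<and> (\<forall>t\<in>{tm<..<tM}. Q t > 0)
   \<and> (Q has_integral 1) {tm..tM}"

definition cfun :: "real \<Rightarrow> real \<Rightarrow> real \<Rightarrow> real \<Rightarrow> real \<Rightarrow> real" where
  "cfun tm tM al r lam = (THE c. \<exists>Q. eig_pair tm tM al r lam (lam * c) Q)"

definition Hfun :: "real \<Rightarrow> real \<Rightarrow> real \<Rightarrow> real \<Rightarrow> real \<Rightarrow> real" where
  "Hfun tm tM al r lam = (if lam = 0 then r else \<bar>lam\<bar> * cfun tm tM al r \<bar>lam\<bar>)"

definition cstar :: "real \<Rightarrow> real \<Rightarrow> real \<Rightarrow> real \<Rightarrow> real" where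
  "cstar tm tM al r = Inf (cfun tm tM al r ` {0<..})"

end

theory Submission
  imports Defs
begin

text \<open>
  The eigenvalue problem depends on lam only through lam^2, so H is even and equals
  |lam| c(|lam|) away from 0, while for lam = 0 the only normalized Neumann eigenfunction is
  the constant one, with eigenvalue r.  The heart of the matter is convexity: if Px and Py are
  the eigenfunctions for x and y, their geometric mean Px^(1-t) Py^t is a positive Neumann
  subsolution for (1-t) x + t y with eigenvalue (1-t) H(x) + t H(y), because log-convex
  combinations only lower the ratio Q''/Q and theta lam^2 is convex in lam for theta > 0.
  Pairing it with the eigenfunction for (1-t) x + t y and integrating by parts gives
  H((1-t) x + t y) \<le> (1-t) H(x) + t H(y).  This needs the eigenfunctions to be positive and
  C^1 up to the boundary, which follows from the equation by Gronwall's inequality for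
  Q^2 + Q'^2.  The remaining claims come from the bounds on c: the perspective s H(lam/s) is
  |lam| c(|lam|/s), whose infimum over s > 0 is |lam| c*, and the arithmetic-geometric mean
  inequality turns lam^2 theta + r into the bounds on c*.
\<close>

lemma derivative_eq_integral_of_second_derivative:
  fixes Q Q' f :: "real \<Rightarrow> real"
  assumes "a < b"
    and Q: "\<And>t. t \<in> {a..b} \<Longrightarrow> (Q has_real_derivative Q' t) (at t within {a..b})"
    and Q': "\<And>t. t \<in> {a<..<b} \<Longrightarrow> (Q' has_real_derivative f t) (at t)"
    and f: "continuous_on {a..b} f"
    and t: "t \<in> {a..b}"
  shows "Q' t = Q' a + integral {a..t} f"
proof -
  define G where "G t = integral {a..t} f" for t
  have G: "(G has_real_derivative f s) (at s within {a..b})" if "s \<in> {a..b}" for s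
    unfolding G_def using integral_has_real_derivative[OF f that] .
  have "\<exists>C. \<forall>s\<in>{a<..<b}. Q' s - G s = C"
  proof (rule has_field_derivative_zero_constant)
    fix s assume s: "s \<in> {a<..<b}"
    have "((\<lambda>u. Q' u - G u) has_real_derivative f s - f s) (at s)"
      using Q'[OF s] G[of s] s at_within_Icc_at[of a s b] by (intro derivative_intros) auto
    then show "((\<lambda>u. Q' u - G u) has_real_derivative 0) (at s within {a<..<b})"
      by (simp add: has_field_derivative_at_within)
  qed simp
  then obtain C where C: "\<And>s. s \<in> {a<..<b} \<Longrightarrow> Q' s = G s + C"
    by (metis add.commute diff_add_cancel)
  \<comment> \<open>Q minus an antiderivative of G + C is constant on the closed interval, so its one-sided
    derivatives at the endpoints vanish too; this forces Q' = G + C up to the boundary.\<close>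
  have GC: "continuous_on {a..b} G"
    using G by (meson DERIV_continuous continuous_on_eq_continuous_within)
  define E where "E s = Q s - integral {a..s} G - C * s" for s
  have E: "(E has_real_derivative Q' s - G s - C) (at s within {a..b})" if s: "s \<in> {a..b}" for s
    unfolding E_def[abs_def]
    by (rule derivative_eq_intros Q[OF s] integral_has_real_derivative[OF GC s] refl)+ simp
  have E_const: "E s = E a" if "s \<in> {a..b}" for s
  proof (rule DERIV_isconst2[OF \<open>a < b\<close>])
    show "continuous_on {a..b} E"
      using E by (meson DERIV_continuous continuous_on_eq_continuous_within)
    fix x assume "a < x" "x < b"
    then show "DERIV E x :> 0"
      using E[of x] C[of x] at_within_Icc_at[of a x b] by auto
  qed (use that in auto)
  have "Q' s = G s + C" if s: "s \<in> {a..b}" for s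
  proof -
    have "((\<lambda>_. E a) has_real_derivative 0) (at s within {a..b})"
      by simp
    then have "(E has_real_derivative 0) (at s within {a..b})"
      by (rule has_field_derivative_transform_within[where d=1, OF _ zero_less_one s])
        (metis E_const)
    then have D0: "(E has_vector_derivative 0) (at s within cbox a b)"
      by (simp add: has_real_derivative_iff_has_vector_derivative)
    have D1: "(E has_vector_derivative Q' s - G s - C) (at s within cbox a b)"
      using E[OF s] by (simp add: has_real_derivative_iff_has_vector_derivative)
    have "0 = Q' s - G s - C"
      using vector_derivative_unique_within_closed_interval[OF \<open>a < b\<close> _ D0 D1] s by simp
    then show ?thesis by simp
  qed
  from this[OF t] this[of a] show ?thesis
    using \<open>a < b\<close> by (simp add: G_def)
qed

lemma gronwall_nonpos:
  fixes E E' :: "real \<Rightarrow> real"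
  assumes "a \<le> b" and E_cont: "continuous_on {a..b} E"
    and E: "\<And>t. t \<in> {a<..<b} \<Longrightarrow> (E has_real_derivative E' t) (at t)"
    and growth: "\<And>t. t \<in> {a<..<b} \<Longrightarrow> E' t \<le> K * E t"
    and "E a \<le> 0"
  shows "E b \<le> 0"
proof -
  define P where "P t = E t * exp (- K * t)" for t
  have "P b \<le> P a"
  proof (rule DERIV_nonpos_imp_decreasing_open[OF \<open>a \<le> b\<close>])
    fix t assume "a < t" "t < b"
    then have t: "t \<in> {a<..<b}" by simp
    have "(P has_real_derivative (E' t - K * E t) * exp (- K * t)) (at t)"
      unfolding P_def[abs_def]
      by (rule derivative_eq_intros E[OF t] refl)+ (simp add: algebra_simps)
    moreover have "(E' t - K * E t) * exp (- K * t) \<le> 0"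
      using growth[OF t] by (simp add: mult_nonpos_nonneg)
    ultimately show "\<exists>y. (P has_real_derivative y) (at t) \<and> y \<le> 0" by blast
  qed (unfold P_def, intro continuous_intros E_cont)
  also have "P a \<le> 0"
    using \<open>E a \<le> 0\<close> by (simp add: P_def mult_nonpos_nonneg)
  finally show ?thesis
    by (simp add: P_def mult_le_0_iff)
qed

text \<open>A solution of Q'' = -k Q with bounded k and Neumann data cannot vanish at an endpoint:
  otherwise Q^2 + Q'^2 would vanish there, and Gronwall's inequality would make it vanish identically.\<close>
lemma neumann_solution_pos:
  fixes Q Q' k :: "real \<Rightarrow> real"
  assumes "a < b" and Q_cont: "continuous_on {a..b} Q" and Q'_cont: "continuous_on {a..b} Q'"
    and Q: "\<And>t. t \<in> {a<..<b} \<Longrightarrow> (Q has_real_derivative Q' t) (at t)"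
    and Q': "\<And>t. t \<in> {a<..<b} \<Longrightarrow> (Q' has_real_derivative - k t * Q t) (at t)"
    and k_bound: "\<And>t. t \<in> {a<..<b} \<Longrightarrow> \<bar>k t\<bar> \<le> K"
    and pos: "\<And>t. t \<in> {a<..<b} \<Longrightarrow> Q t > 0"
    and "Q' a = 0" and "Q' b = 0"
    and t: "t \<in> {a..b}"
  shows "Q t > 0"
proof -
  define E where "E t = (Q t)\<^sup>2 + (Q' t)\<^sup>2" for t
  define E' where "E' t = 2 * Q t * Q' t * (1 - k t)" for t
  have E_cont: "continuous_on {a..b} E"
    unfolding E_def by (intro continuous_intros Q_cont Q'_cont)
  have E: "(E has_real_derivative E' t) (at t)" if "t \<in> {a<..<b}" for t
    unfolding E_def[abs_def] E'_def
    by (rule derivative_eq_intros Q[OF that] Q'[OF that] refl)+ (simp add: algebra_simps)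
  have E'_bound: "\<bar>E' t\<bar> \<le> (1 + K) * E t" if "t \<in> {a<..<b}" for t
  proof -
    have "2 * \<bar>Q t\<bar> * \<bar>Q' t\<bar> \<le> E t"
      using sum_squares_bound[of "\<bar>Q t\<bar>" "\<bar>Q' t\<bar>"] by (simp add: E_def)
    moreover have "\<bar>1 - k t\<bar> \<le> 1 + K"
      using k_bound[OF that] by linarith
    ultimately have "(2 * \<bar>Q t\<bar> * \<bar>Q' t\<bar>) * \<bar>1 - k t\<bar> \<le> E t * (1 + K)"
      by (intro mult_mono) (auto simp: E_def)
    then show ?thesis
      by (simp add: E'_def abs_mult mult.commute)
  qed
  define m where "m = (a + b) / 2"
  have m: "m \<in> {a<..<b}" using \<open>a < b\<close> by (simp add: m_def)
  have "E m > 0"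
    using pos[OF m] by (simp add: E_def add_pos_nonneg)
  have "E a \<noteq> 0"
  proof
    assume "E a = 0"
    have "E m \<le> 0"
    proof (rule gronwall_nonpos[of a m E E' "1 + K"])
      show "continuous_on {a..m} E"
        using m by (intro continuous_on_subset[OF E_cont]) auto
    qed (use m E E'_bound \<open>E a = 0\<close> in \<open>auto simp: abs_le_iff\<close>)
    with \<open>E m > 0\<close> show False by simp
  qed
  moreover have "E b \<noteq> 0"
  proof
    assume "E b = 0"
    have "E (- (- m)) \<le> 0"
    proof (rule gronwall_nonpos[of "- b" "- m" "\<lambda>t. E (- t)" "\<lambda>t. - E' (- t)" "1 + K"])
      show "continuous_on {- b..- m} (\<lambda>t. E (- t))"
        using m by (intro continuous_on_compose2[OF E_cont]) (auto intro: continuous_intros)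
      fix t assume "t \<in> {- b<..<- m}"
      then have "- t \<in> {a<..<b}" using m by auto
      then show "((\<lambda>t. E (- t)) has_real_derivative - E' (- t)) (at t)"
          and "- E' (- t) \<le> (1 + K) * E (- t)"
        using E DERIV_mirror E'_bound[of "- t"] by (auto simp: abs_le_iff)
    qed (use m \<open>E b = 0\<close> in auto)
    with \<open>E m > 0\<close> show False by simp
  qed
  moreover have "Q t \<ge> 0"
    using continuous_ge_on_closure[of "{a<..<b}" Q t 0] Q_cont pos t \<open>a < b\<close> by (auto simp: less_imp_le)
  ultimately show ?thesis
    using pos[of t] t \<open>Q' a = 0\<close> \<open>Q' b = 0\<close> by (cases "t = a \<or> t = b") (auto simp: E_def)
qed

lemma eig_pair_classical:
  assumes eig: "eig_pair a b al r lam h Q" and "a < b" and "0 < al"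
  obtains Q' where
    "Q' a = 0" "Q' b = 0"
    "\<And>t. t \<in> {a..b} \<Longrightarrow> (Q has_real_derivative Q' t) (at t within {a..b})"
    "\<And>t. t \<in> {a<..<b} \<Longrightarrow> (Q has_real_derivative Q' t) (at t)"
    "\<And>t. t \<in> {a<..<b} \<Longrightarrow> (Q' has_real_derivative (h - t * lam\<^sup>2 - r) / al * Q t) (at t)"
    "continuous_on {a..b} Q" "continuous_on {a..b} Q'"
    "\<And>t. t \<in> {a..b} \<Longrightarrow> Q t > 0"
    "(Q has_integral 1) {a..b}"
proof -
  obtain Q' Q'' where
    Q: "\<And>t. t \<in> {a..b} \<Longrightarrow> (Q has_real_derivative Q' t) (at t within {a..b})"
    and Q': "\<And>t. t \<in> {a<..<b} \<Longrightarrow> (Q' has_real_derivative Q'' t) (at t)"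
    and ode: "\<And>t. t \<in> {a<..<b} \<Longrightarrow> (- h + t * lam\<^sup>2 + r) * Q t + al * Q'' t = 0"
    and "Q' a = 0" "Q' b = 0"
    and pos: "\<And>t. t \<in> {a<..<b} \<Longrightarrow> Q t > 0"
    and "(Q has_integral 1) {a..b}"
    using eig unfolding eig_pair_def by blast
  define k where "k t = (h - t * lam\<^sup>2 - r) / al" for t
  have Q'': "(Q' has_real_derivative k t * Q t) (at t)" if "t \<in> {a<..<b}" for t
  proof -
    have "Q'' t = k t * Q t"
      using ode[OF that] \<open>0 < al\<close> by (simp add: k_def field_simps)
    then show ?thesis using Q'[OF that] by simp
  qed
  have Q_open: "(Q has_real_derivative Q' t) (at t)" if "t \<in> {a<..<b}" for t
    using Q[of t] that at_within_Icc_at[of a t b] by auto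
  have Q_cont: "continuous_on {a..b} Q"
    using Q by (meson DERIV_continuous continuous_on_eq_continuous_within)
  have k_cont: "continuous_on {a..b} k"
    unfolding k_def using \<open>0 < al\<close> by (intro continuous_intros) auto
  have kQ_cont: "continuous_on {a..b} (\<lambda>t. k t * Q t)"
    by (intro continuous_intros k_cont Q_cont)
  have "Q' t = integral {a..t} (\<lambda>t. k t * Q t)" if "t \<in> {a..b}" for t
    using derivative_eq_integral_of_second_derivative[OF \<open>a < b\<close> Q Q'' kQ_cont that]
      \<open>Q' a = 0\<close> by simp
  then have Q'_cont: "continuous_on {a..b} Q'"
    using indefinite_integral_continuous_1[OF integrable_continuous_real[OF kQ_cont]]
    by (metis (no_types, lifting) continuous_on_eq)
  obtain K where K: "\<And>t. t \<in> {a..b} \<Longrightarrow> \<bar>k t\<bar> \<le> K"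
    using continuous_on_compact_bound[OF compact_Icc k_cont] by (metis real_norm_def)
  have "Q t > 0" if "t \<in> {a..b}" for t
    by (rule neumann_solution_pos[where k="\<lambda>t. - k t" and K=K,
          OF \<open>a < b\<close> Q_cont Q'_cont Q_open _ _ pos \<open>Q' a = 0\<close> \<open>Q' b = 0\<close> that])
      (use Q'' K in auto)
  with that[of Q'] show thesis
    using Q Q_open Q'' Q_cont Q'_cont \<open>Q' a = 0\<close> \<open>Q' b = 0\<close> \<open>(Q has_integral 1) {a..b}\<close>
    by (simp add: k_def)
qed

lemma eig_pair_abs: "eig_pair a b al r \<bar>lam\<bar> h Q = eig_pair a b al r lam h Q"
  unfolding eig_pair_def by simp

lemma eig_pair_zero_const:
  assumes "a < b"
  shows "eig_pair a b al r 0 r (\<lambda>_. 1 / (b - a))"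
  unfolding eig_pair_def
proof (intro conjI exI[of _ "\<lambda>_. 0"])
  show "((\<lambda>_. 1 / (b - a)) has_integral 1) {a..b}"
    using has_integral_const_real[of "1 / (b - a)" a b] \<open>a < b\<close> by simp
qed (use \<open>a < b\<close> in auto)

lemma eig_pair_zero_unique:
  assumes eig: "eig_pair a b al r 0 h Q" and "a < b" and "0 < al"
  shows "h = r" and "t \<in> {a..b} \<Longrightarrow> Q t = 1 / (b - a)"
proof -
  obtain Q' where "Q' a = 0" "Q' b = 0"
    and Q: "\<And>t. t \<in> {a..b} \<Longrightarrow> (Q has_real_derivative Q' t) (at t within {a..b})"
    and Q': "\<And>t. t \<in> {a<..<b} \<Longrightarrow> (Q' has_real_derivative (h - r) / al * Q t) (at t)"
    and Q'_cont: "continuous_on {a..b} Q'"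
    and int: "(Q has_integral 1) {a..b}"
    by (rule eig_pair_classical[OF eig \<open>a < b\<close> \<open>0 < al\<close>]) simp
  have "((\<lambda>t. (h - r) / al * Q t) has_integral Q' b - Q' a) {a..b}"
    using Q' by (intro fundamental_theorem_of_calculus_interior[OF _ Q'_cont])
      (use \<open>a < b\<close> in \<open>auto simp: has_real_derivative_iff_has_vector_derivative\<close>)
  moreover have "((\<lambda>t. (h - r) / al * Q t) has_integral (h - r) / al) {a..b}"
    using has_integral_mult_right[OF int, of "(h - r) / al"] by simp
  ultimately have "(h - r) / al = 0"
    using \<open>Q' a = 0\<close> \<open>Q' b = 0\<close> by (metis has_integral_unique diff_self)
  then show "h = r"
    using \<open>0 < al\<close> by simp
  have Q'_zero: "Q' s = 0" if "s \<in> {a..b}" for s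
  proof -
    have "Q' s = Q' a"
      by (rule DERIV_isconst2[OF \<open>a < b\<close> Q'_cont]) (use Q' \<open>h = r\<close> that in auto)
    with \<open>Q' a = 0\<close> show ?thesis by simp
  qed
  have "\<exists>c. \<forall>s\<in>{a..b}. Q s = c"
    by (rule has_field_derivative_zero_constant) (use Q Q'_zero in force)+
  then obtain c where c: "\<And>s. s \<in> {a..b} \<Longrightarrow> Q s = c"
    by blast
  have "((\<lambda>_. c) has_integral 1) {a..b}"
    using int by (rule has_integral_eq[rotated]) (use c in auto)
  then have "c * (b - a) = 1"
    using has_integral_const_real[of c a b] \<open>a < b\<close> has_integral_unique by (simp add: mult.commute)
  then show "t \<in> {a..b} \<Longrightarrow> Q t = 1 / (b - a)"
    using c \<open>a < b\<close> by (simp add: field_simps)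
qed

lemma has_integral_pos_continuous:
  fixes f :: "real \<Rightarrow> real"
  assumes "a < b" and f_cont: "continuous_on {a..b} f" and pos: "\<And>t. t \<in> {a..b} \<Longrightarrow> f t > 0"
    and int: "(f has_integral J) {a..b}"
  shows "J > 0"
proof -
  obtain s where s: "s \<in> {a..b}" and min: "\<And>t. t \<in> {a..b} \<Longrightarrow> f s \<le> f t"
    using continuous_attains_inf[OF compact_Icc _ f_cont] \<open>a < b\<close> by auto
  have "f s * (b - a) \<le> J"
    using has_integral_le[OF has_integral_const_real[of "f s" a b] int] min \<open>a < b\<close>
    by (simp add: mult.commute)
  moreover have "f s * (b - a) > 0"
    using pos[OF s] \<open>a < b\<close> by simp
  ultimately show ?thesis by simp
qed

text \<open>The derivative of al (Q' P - Q P') is at most (h' - h) Q P and its boundary values vanish,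
  so integration gives 0 \<le> (h' - h) \<integral> Q P.\<close>
lemma eig_pair_le_of_subsolution:
  fixes Q Q' Q'' :: "real \<Rightarrow> real"
  assumes eig: "eig_pair a b al r lam h P" and "a < b" and "0 < al"
    and Q_cont: "continuous_on {a..b} Q" and Q'_cont: "continuous_on {a..b} Q'"
    and Q: "\<And>t. t \<in> {a<..<b} \<Longrightarrow> (Q has_real_derivative Q' t) (at t)"
    and Q': "\<And>t. t \<in> {a<..<b} \<Longrightarrow> (Q' has_real_derivative Q'' t) (at t)"
    and "Q' a = 0" "Q' b = 0"
    and Q_pos: "\<And>t. t \<in> {a..b} \<Longrightarrow> Q t > 0"
    and sub: "\<And>t. t \<in> {a<..<b} \<Longrightarrow> al * Q'' t + (- h' + t * lam\<^sup>2 + r) * Q t \<le> 0"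
  shows "h \<le> h'"
proof -
  obtain P' where "P' a = 0" "P' b = 0"
    and P: "\<And>t. t \<in> {a<..<b} \<Longrightarrow> (P has_real_derivative P' t) (at t)"
    and P': "\<And>t. t \<in> {a<..<b} \<Longrightarrow> (P' has_real_derivative (h - t * lam\<^sup>2 - r) / al * P t) (at t)"
    and P_cont: "continuous_on {a..b} P" and P'_cont: "continuous_on {a..b} P'"
    and P_pos: "\<And>t. t \<in> {a..b} \<Longrightarrow> P t > 0"
    by (rule eig_pair_classical[OF eig \<open>a < b\<close> \<open>0 < al\<close>]) blast
  define F where "F t = al * (Q' t * P t - Q t * P' t)" for t
  define g where "g t = P t * (al * Q'' t + (- h + t * lam\<^sup>2 + r) * Q t)" for t
  have "(g has_integral F b - F a) {a..b}"
  proof (rule fundamental_theorem_of_calculus_interior)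
    show "continuous_on {a..b} F"
      unfolding F_def by (intro continuous_intros Q_cont Q'_cont P_cont P'_cont)
    fix t assume t: "t \<in> {a<..<b}"
    have "(F has_real_derivative g t) (at t)"
      unfolding F_def[abs_def]
      by (rule derivative_eq_intros Q[OF t] Q'[OF t] P[OF t] P'[OF t] refl)+
        (use \<open>0 < al\<close> in \<open>simp add: g_def field_simps\<close>)
    then show "(F has_vector_derivative g t) (at t)"
      by (simp add: has_real_derivative_iff_has_vector_derivative)
  qed (use \<open>a < b\<close> in simp)
  then have g_int: "(g has_integral 0) {a<..<b}"
    by (simp add: F_def \<open>Q' a = 0\<close> \<open>Q' b = 0\<close> \<open>P' a = 0\<close> \<open>P' b = 0\<close>
        has_integral_Icc_iff_Ioo)
  obtain J where J: "((\<lambda>t. Q t * P t) has_integral J) {a..b}"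
    using integrable_continuous_real[of a b "\<lambda>t. Q t * P t"] Q_cont P_cont
    by (auto intro: continuous_intros)
  have "J > 0"
    by (rule has_integral_pos_continuous[OF \<open>a < b\<close> _ _ J])
      (use Q_pos P_pos in \<open>auto intro!: continuous_intros Q_cont P_cont\<close>)
  have "g t \<le> (h' - h) * (Q t * P t)" if t: "t \<in> {a<..<b}" for t
  proof -
    have "g t = P t * (al * Q'' t + (- h' + t * lam\<^sup>2 + r) * Q t) + (h' - h) * (Q t * P t)"
      by (simp add: g_def algebra_simps)
    also have "\<dots> \<le> (h' - h) * (Q t * P t)"
      using sub[OF t] P_pos[of t] t by (simp add: mult_nonneg_nonpos)
    finally show ?thesis .
  qed
  then have "0 \<le> (h' - h) * J"
    using has_integral_le[OF g_int has_integral_mult_right[OF J[unfolded has_integral_Icc_iff_Ioo]]]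
    by simp
  with \<open>J > 0\<close> show ?thesis
    by (simp add: zero_le_mult_iff)
qed

lemma geometric_mean_has_derivatives:
  fixes u v u' v' :: "real \<Rightarrow> real" and t :: real
  assumes "u x > 0" "v x > 0"
    and u: "(u has_real_derivative u' x) (at x)" and v: "(v has_real_derivative v' x) (at x)"
    and u': "(u' has_real_derivative U) (at x)" and v': "(v' has_real_derivative V) (at x)"
  defines "g \<equiv> \<lambda>s. exp ((1 - t) * ln (u s) + t * ln (v s))"
  shows "(g has_real_derivative g x * ((1 - t) * (u' x / u x) + t * (v' x / v x))) (at x)"
    and "((\<lambda>s. g s * ((1 - t) * (u' s / u s) + t * (v' s / v s))) has_real_derivative
           g x * ((1 - t) * (U / u x) + t * (V / v x) - t * (1 - t) * (u' x / u x - v' x / v x)\<^sup>2))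
         (at x)"
proof -
  have nz: "u x \<noteq> 0" "v x \<noteq> 0"
    using assms(1,2) by auto
  show g: "(g has_real_derivative g x * ((1 - t) * (u' x / u x) + t * (v' x / v x))) (at x)"
    unfolding g_def
    by (rule derivative_eq_intros u v refl assms(1,2))+ (simp add: g_def field_simps)
  show "((\<lambda>s. g s * ((1 - t) * (u' s / u s) + t * (v' s / v s))) has_real_derivative
           g x * ((1 - t) * (U / u x) + t * (V / v x) - t * (1 - t) * (u' x / u x - v' x / v x)\<^sup>2))
         (at x)"
    by (rule derivative_eq_intros g u v u' v' refl nz)+
      (use nz in \<open>simp add: field_simps power2_eq_square\<close>)
qed

text \<open>The geometric mean Px^(1-t) Py^t of the eigenfunctions at x and y is a positive
  Neumann subsolution for (1 - t) x + t y with eigenvalue (1 - t) hx + t hy; this is where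
  a > 0 enters, through the convexity of lam \<mapsto> s lam^2 for s \<in> [a, b].\<close>
lemma eig_pair_eigenvalue_convex:
  assumes "a < b" "0 < a" "0 < al" and "0 \<le> t" "t \<le> 1"
    and eig_x: "eig_pair a b al r x hx Px" and eig_y: "eig_pair a b al r y hy Py"
    and eig_z: "eig_pair a b al r ((1 - t) * x + t * y) hz Pz"
  shows "hz \<le> (1 - t) * hx + t * hy"
proof -
  obtain Px' where "Px' a = 0" "Px' b = 0"
    and Px: "\<And>s. s \<in> {a<..<b} \<Longrightarrow> (Px has_real_derivative Px' s) (at s)"
    and Px': "\<And>s. s \<in> {a<..<b} \<Longrightarrow> (Px' has_real_derivative (hx - s * x\<^sup>2 - r) / al * Px s) (at s)"
    and Px_cont: "continuous_on {a..b} Px" and Px'_cont: "continuous_on {a..b} Px'"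
    and Px_pos: "\<And>s. s \<in> {a..b} \<Longrightarrow> Px s > 0"
    by (rule eig_pair_classical[OF eig_x \<open>a < b\<close> \<open>0 < al\<close>]) blast
  obtain Py' where "Py' a = 0" "Py' b = 0"
    and Py: "\<And>s. s \<in> {a<..<b} \<Longrightarrow> (Py has_real_derivative Py' s) (at s)"
    and Py': "\<And>s. s \<in> {a<..<b} \<Longrightarrow> (Py' has_real_derivative (hy - s * y\<^sup>2 - r) / al * Py s) (at s)"
    and Py_cont: "continuous_on {a..b} Py" and Py'_cont: "continuous_on {a..b} Py'"
    and Py_pos: "\<And>s. s \<in> {a..b} \<Longrightarrow> Py s > 0"
    by (rule eig_pair_classical[OF eig_y \<open>a < b\<close> \<open>0 < al\<close>]) blast
  define Q where "Q s = exp ((1 - t) * ln (Px s) + t * ln (Py s))" for s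
  define Q' where "Q' s = Q s * ((1 - t) * (Px' s / Px s) + t * (Py' s / Py s))" for s
  define D where "D s = Px' s / Px s - Py' s / Py s" for s
  define Q'' where "Q'' s = Q s * ((1 - t) * ((hx - s * x\<^sup>2 - r) / al) + t * ((hy - s * y\<^sup>2 - r) / al)
      - t * (1 - t) * (D s)\<^sup>2)" for s
  have Q: "(Q has_real_derivative Q' s) (at s)" and Q': "(Q' has_real_derivative Q'' s) (at s)"
    if s: "s \<in> {a<..<b}" for s
    using geometric_mean_has_derivatives[OF Px_pos Py_pos Px[OF s] Py[OF s] Px'[OF s] Py'[OF s], of t]
      s Px_pos[of s] Py_pos[of s]
    by (simp_all add: Q_def[abs_def] Q'_def[abs_def] Q''_def D_def)
  have Q_cont: "continuous_on {a..b} Q"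
    unfolding Q_def
    by (intro continuous_intros Px_cont Py_cont) (use Px_pos Py_pos in force)+
  have Q'_cont: "continuous_on {a..b} Q'"
    unfolding Q'_def
    by (intro continuous_intros Q_cont Px_cont Py_cont Px'_cont Py'_cont)
      (use Px_pos Py_pos in force)+
  show ?thesis
  proof (rule eig_pair_le_of_subsolution[OF eig_z \<open>a < b\<close> \<open>0 < al\<close> Q_cont Q'_cont Q Q'])
    show "Q' a = 0" "Q' b = 0"
      by (simp_all add: Q'_def \<open>Px' a = 0\<close> \<open>Px' b = 0\<close> \<open>Py' a = 0\<close> \<open>Py' b = 0\<close>)
    show "Q s > 0" for s
      by (simp add: Q_def)
    fix s assume s: "s \<in> {a<..<b}"
    have "al * Q'' s + (- ((1 - t) * hx + t * hy) + s * ((1 - t) * x + t * y)\<^sup>2 + r) * Q s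
        = - Q s * t * (1 - t) * (s * (x - y)\<^sup>2 + al * (D s)\<^sup>2)"
      using \<open>0 < al\<close> by (simp add: Q''_def field_simps power2_eq_square)
    also have "\<dots> \<le> 0"
      using s \<open>0 < a\<close> \<open>0 < al\<close> \<open>0 \<le> t\<close> \<open>t \<le> 1\<close>
      by (intro mult_nonpos_nonneg add_nonneg_nonneg mult_nonneg_nonneg) (auto simp: Q_def)
    finally show "al * Q'' s + (- ((1 - t) * hx + t * hy) + s * ((1 - t) * x + t * y)\<^sup>2 + r) * Q s \<le> 0" .
  qed
qed

lemma convex_on_eigenvalue:
  fixes H :: "real \<Rightarrow> real"
  assumes "a < b" "0 < a" "0 < al" and eig: "\<And>lam. \<exists>Q. eig_pair a b al r lam (H lam) Q"
  shows "convex_on UNIV H"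
proof (rule convex_onI)
  fix t x y :: real assume "0 < t" "t < 1"
  obtain Px Py Pz where "eig_pair a b al r x (H x) Px" "eig_pair a b al r y (H y) Py"
    and "eig_pair a b al r ((1 - t) * x + t * y) (H ((1 - t) * x + t * y)) Pz"
    using eig by meson
  then show "H ((1 - t) *\<^sub>R x + t *\<^sub>R y) \<le> (1 - t) * H x + t * H y"
    using eig_pair_eigenvalue_convex[OF assms(1-3)] \<open>0 < t\<close> \<open>t < 1\<close> by simp
qed simp

lemma Hfun_eig_pair_unique:
  assumes "a < b" "0 < al"
    and exuniq: "\<And>lam. lam > 0 \<Longrightarrow>
        \<exists>Q. eig_pair a b al r lam (lam * cfun a b al r lam) Q \<and>
            (\<forall>d Q'. eig_pair a b al r lam (lam * d) Q' \<longrightarrow>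
                 d = cfun a b al r lam \<and> (\<forall>t\<in>{a..b}. Q' t = Q t))"
  shows "\<exists>Q. eig_pair a b al r lam (Hfun a b al r lam) Q \<and>
            (\<forall>h Q'. eig_pair a b al r lam h Q' \<longrightarrow>
                 h = Hfun a b al r lam \<and> (\<forall>t\<in>{a..b}. Q' t = Q t))"
proof (cases "lam = 0")
  case True
  then show ?thesis
    using eig_pair_zero_const[OF \<open>a < b\<close>] eig_pair_zero_unique[OF _ assms(1,2)]
    by (intro exI[of _ "\<lambda>_. 1 / (b - a)"]) (auto simp: Hfun_def)
next
  case False
  then have "\<bar>lam\<bar> > 0" by simp
  then obtain Q where Q: "eig_pair a b al r \<bar>lam\<bar> (\<bar>lam\<bar> * cfun a b al r \<bar>lam\<bar>) Q"
    and unique: "\<And>d Q'. eig_pair a b al r \<bar>lam\<bar> (\<bar>lam\<bar> * d) Q' \<Longrightarrow>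
        d = cfun a b al r \<bar>lam\<bar> \<and> (\<forall>t\<in>{a..b}. Q' t = Q t)"
    using exuniq by blast
  show ?thesis
  proof (intro exI[of _ Q] conjI allI impI)
    show "eig_pair a b al r lam (Hfun a b al r lam) Q"
      using Q False by (simp add: Hfun_def eig_pair_abs)
    fix h Q' assume "eig_pair a b al r lam h Q'"
    then have "eig_pair a b al r \<bar>lam\<bar> (\<bar>lam\<bar> * (h / \<bar>lam\<bar>)) Q'"
      using False by (simp add: eig_pair_abs)
    from unique[OF this] show "h = Hfun a b al r lam" "\<forall>t\<in>{a..b}. Q' t = Q t"
      using False by (auto simp: Hfun_def field_simps)
  qed
qed

lemma Hfun_bounds:
  assumes bounds: "\<And>lam. lam > 0 \<Longrightarrow>
      lam\<^sup>2 * a + r \<le> lam * cfun a b al r lam \<and> lam * cfun a b al r lam \<le> lam\<^sup>2 * b + r"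
  shows "lam\<^sup>2 * a + r \<le> Hfun a b al r lam \<and> Hfun a b al r lam \<le> lam\<^sup>2 * b + r"
  using bounds[of "\<bar>lam\<bar>"] by (cases "lam = 0") (simp_all add: Hfun_def)

lemma Hfun_continuous:
  assumes cont: "continuous_on {0<..} (cfun a b al r)"
    and bounds: "\<And>lam. lam > 0 \<Longrightarrow>
      lam\<^sup>2 * a + r \<le> lam * cfun a b al r lam \<and> lam * cfun a b al r lam \<le> lam\<^sup>2 * b + r"
  shows "continuous_on UNIV (Hfun a b al r)"
proof (intro continuous_at_imp_continuous_on ballI)
  fix x :: real
  show "isCont (Hfun a b al r) x"
  proof (cases "x = 0")
    case True
    have "(Hfun a b al r \<longlongrightarrow> Hfun a b al r 0) (at 0)"
    proof (rule tendsto_sandwich[where f="\<lambda>l. l\<^sup>2 * a + r" and h="\<lambda>l. l\<^sup>2 * b + r"])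
      show "((\<lambda>l. l\<^sup>2 * a + r) \<longlongrightarrow> Hfun a b al r 0) (at 0)"
        and "((\<lambda>l. l\<^sup>2 * b + r) \<longlongrightarrow> Hfun a b al r 0) (at 0)"
        by (auto simp: Hfun_def intro!: tendsto_eq_intros)
    qed (use Hfun_bounds[OF bounds] in auto)
    then show ?thesis
      using True by (simp add: isCont_def)
  next
    case False
    have near: "\<forall>\<^sub>F l in nhds x. Hfun a b al r l = \<bar>l\<bar> * cfun a b al r \<bar>l\<bar>"
      using t1_space_nhds[OF False] by eventually_elim (simp add: Hfun_def)
    have "isCont (cfun a b al r) \<bar>x\<bar>"
      using cont False by (simp add: continuous_on_eq_continuous_at)
    then have "isCont (\<lambda>l. \<bar>l\<bar> * cfun a b al r \<bar>l\<bar>) x"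
      by (intro continuous_intros isCont_o2[where f=abs]) auto
    then show ?thesis
      using isCont_cong[OF near] by simp
  qed
qed

lemma cstar_eq_min:
  assumes "ls > 0" and min: "\<And>lam. lam > 0 \<Longrightarrow> cfun a b al r ls \<le> cfun a b al r lam"
  shows "cstar a b al r = cfun a b al r ls"
  unfolding cstar_def by (rule cInf_eq_minimum) (use assms in auto)

lemma Hfun_perspective_INF:
  assumes "0 < r" and "ls > 0" and min: "\<And>lam. lam > 0 \<Longrightarrow> cfun a b al r ls \<le> cfun a b al r lam"
  shows "(INF s\<in>{0<..}. s * Hfun a b al r (lam / s)) = \<bar>lam\<bar> * cstar a b al r"
proof (cases "lam = 0")
  case True
  have "(\<lambda>s. s * Hfun a b al r (lam / s)) ` {0<..} = (\<lambda>s. s * r) ` {0<..}"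
    using True by (simp add: Hfun_def)
  also have "\<dots> = {0<..}"
    using \<open>0 < r\<close> by (auto simp: image_iff intro!: bexI[of _ "_ / r"])
  finally show ?thesis
    using True by simp
next
  case False
  have scaled: "s * Hfun a b al r (lam / s) = \<bar>lam\<bar> * cfun a b al r (\<bar>lam\<bar> / s)" if "s > 0" for s
    using False that by (simp add: Hfun_def abs_divide)
  show ?thesis
  proof (rule cInf_eq_minimum)
    show "\<bar>lam\<bar> * cstar a b al r \<in> (\<lambda>s. s * Hfun a b al r (lam / s)) ` {0<..}"
      using scaled[of "\<bar>lam\<bar> / ls"] False \<open>ls > 0\<close> cstar_eq_min[OF \<open>ls > 0\<close> min]
      by (intro image_eqI[of _ _ "\<bar>lam\<bar> / ls"]) auto
    fix y assume "y \<in> (\<lambda>s. s * Hfun a b al r (lam / s)) ` {0<..}"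
    then obtain s where "s > 0" and y: "y = s * Hfun a b al r (lam / s)" by auto
    then show "\<bar>lam\<bar> * cstar a b al r \<le> y"
      using scaled[of s] min[of "\<bar>lam\<bar> / s"] False cstar_eq_min[OF \<open>ls > 0\<close> min]
      by (simp add: mult_left_mono)
  qed
qed

lemma cstar_bounds:
  assumes "0 < a" "a < b" "0 < r"
    and bounds: "\<And>lam. lam > 0 \<Longrightarrow>
      lam\<^sup>2 * a + r \<le> lam * cfun a b al r lam \<and> lam * cfun a b al r lam \<le> lam\<^sup>2 * b + r"
    and "ls > 0" and min: "\<And>lam. lam > 0 \<Longrightarrow> cfun a b al r ls \<le> cfun a b al r lam"
  shows "2 * sqrt (a * r) \<le> cstar a b al r" and "cstar a b al r \<le> 2 * sqrt (b * r)"
proof -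
  have "ls * (2 * sqrt (a * r)) = 2 * sqrt (ls\<^sup>2 * a * r)"
    using \<open>ls > 0\<close> by (simp add: real_sqrt_mult)
  also have "\<dots> \<le> ls\<^sup>2 * a + r"
    using arith_geo_mean_sqrt[of "ls\<^sup>2 * a" r] \<open>0 < a\<close> \<open>0 < r\<close> by (simp add: mult.assoc)
  also have "\<dots> \<le> ls * cfun a b al r ls"
    using bounds[OF \<open>ls > 0\<close>] by simp
  finally show "2 * sqrt (a * r) \<le> cstar a b al r"
    using \<open>ls > 0\<close> cstar_eq_min[OF \<open>ls > 0\<close> min] by simp
  define l where "l = sqrt (r / b)"
  have "l > 0" and l2: "l\<^sup>2 * b = r"
    using assms(1-3) by (simp_all add: l_def)
  have "l * cfun a b al r l \<le> l\<^sup>2 * b + r"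
    using bounds[OF \<open>l > 0\<close>] by simp
  also have "\<dots> = l * (2 * sqrt (b * r))"
    using l2 \<open>l > 0\<close> assms(1-3)
    by (simp add: l_def real_sqrt_mult real_sqrt_divide field_simps)
  finally have "cfun a b al r l \<le> 2 * sqrt (b * r)"
    using \<open>l > 0\<close> by simp
  then show "cstar a b al r \<le> 2 * sqrt (b * r)"
    using min[OF \<open>l > 0\<close>] cstar_eq_min[OF \<open>ls > 0\<close> min] by simp
qed

theorem proposition1p12:
  fixes tm tM al r :: real
  defines "c \<equiv> cfun tm tM al r" and "H \<equiv> Hfun tm tM al r" and "cs \<equiv> cstar tm tM al r"
  assumes "0 < tm" and "tm < tM" and "0 < al" and "0 < r"
    and exuniq_c: "\<And>lam. lam > 0 \<Longrightarrow>
        \<exists>Q. eig_pair tm tM al r lam (lam * c lam) Q \<and>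
            (\<forall>d Q'. eig_pair tm tM al r lam (lam * d) Q' \<longrightarrow>
                 d = c lam \<and> (\<forall>t\<in>{tm..tM}. Q' t = Q t))"
    and cont_c: "continuous_on {0<..} c"
    and bounds_c: "\<And>lam. lam > 0 \<Longrightarrow>
        lam\<^sup>2 * tm + r \<le> lam * c lam \<and> lam * c lam \<le> lam\<^sup>2 * tM + r"
    and min_c: "\<exists>ls>0. \<forall>lam>0. c ls \<le> c lam"
  shows "(\<forall>lam. \<exists>Q. eig_pair tm tM al r lam (H lam) Q \<and>
            (\<forall>h Q'. eig_pair tm tM al r lam h Q' \<longrightarrow>
                 h = H lam \<and> (\<forall>t\<in>{tm..tM}. Q' t = Q t)))
       \<and> continuous_on UNIV H \<and> convex_on UNIV H
       \<and> (\<forall>lam. lam\<^sup>2 * tm + r \<le> H lam \<and> H lam \<le> lam\<^sup>2 * tM + r)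
       \<and> (\<forall>lam. (INF s\<in>{0<..}. s * H (lam / s)) = \<bar>lam\<bar> * cs)
       \<and> 2 * sqrt (tm * r) \<le> cs \<and> cs \<le> 2 * sqrt (tM * r)"
proof -
  note exuniq = exuniq_c[unfolded c_def] and bounds = bounds_c[unfolded c_def]
  obtain ls where "ls > 0" and min: "\<And>lam. lam > 0 \<Longrightarrow> cfun tm tM al r ls \<le> cfun tm tM al r lam"
    using min_c unfolding c_def by blast
  have eig: "\<exists>Q. eig_pair tm tM al r lam (H lam) Q \<and>
      (\<forall>h Q'. eig_pair tm tM al r lam h Q' \<longrightarrow> h = H lam \<and> (\<forall>t\<in>{tm..tM}. Q' t = Q t))" for lam
    unfolding H_def using Hfun_eig_pair_unique[OF \<open>tm < tM\<close> \<open>0 < al\<close> exuniq] .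
  have "convex_on UNIV H"
    using convex_on_eigenvalue[OF \<open>tm < tM\<close> \<open>0 < tm\<close> \<open>0 < al\<close>] eig by meson
  moreover have "continuous_on UNIV H"
    unfolding H_def using Hfun_continuous[OF cont_c[unfolded c_def] bounds] .
  moreover note Hfun_bounds[OF bounds, folded H_def]
    and Hfun_perspective_INF[OF \<open>0 < r\<close> \<open>ls > 0\<close> min, folded H_def cs_def]
    and cstar_bounds[OF \<open>0 < tm\<close> \<open>tm < tM\<close> \<open>0 < r\<close> bounds \<open>ls > 0\<close> min, folded cs_def]
  ultimately show ?thesis
    using eig by blast
qed

end
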